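(* Let $n$ be a non-negative integer, let $(a_k)_{k\ge 1}$ be a sequence of complex numbers, and let $r$ be a complex number that is not a negative integer. Then $$\sum_{k = 1}^n \sum_{j = 0}^{k - 1} \frac{a_{n - j}}{k - j + r} = \sum_{k = 1}^n a_k H_{k + r} - H_r \sum_{k = 1}^n a_k.$$ In particular, $$\sum_{k = 1}^n \sum_{j = 0}^{k - 1} \frac{a_{n - j}}{k - j} = \sum_{k = 1}^n a_k H_k \qquad\text{and}\qquad \sum_{k = 1}^n \sum_{j = 0}^{k - 1} \frac{a_{n - j}}{2k - 2j - 1} = \sum_{k = 1}^n a_k O_k.$$
   Context: For a complex number $z$ that is not a negative integer, the harmonic number is $H_z=\sum_{m=1}^\infty\left(\frac1m-\frac1{m+z}\right)$ (so $H_0=0$ and $H_n=\sum_{m=1}^n \frac1m$ for non-negative integers $n$). The odd harmonic numbers are $O_n=\sum_{m=1}^n \frac{1}{2m-1}$. Empty sums are zero. *)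

theory Defs
  imports "HOL-Analysis.Analysis"
begin

definition cHarm :: "complex \<Rightarrow> complex" where
  "cHarm z = (\<Sum>m. 1 / of_nat (Suc m) - 1 / (of_nat (Suc m) + z))"

definition oddHarm :: "nat \<Rightarrow> complex" where
  "oddHarm n = (\<Sum>m=1..n. 1 / (2 * of_nat m - 1))"

end

theory Submission
  imports Defs
begin

text \<open>Exchanging the order of summation turns the left-hand side into
  \<open>\<Sum>i=1..n. a i * (\<Sum>m=1..i. 1 / (m + r))\<close>, and the inner sum telescopes to
  \<open>H(i + r) - H(r)\<close> by the functional equation \<open>H(z + 1) = H(z) + 1 / (z + 1)\<close>.
  The odd harmonic case is the same exchange with denominators \<open>2m - 1\<close>.\<close>

lemma summable_cHarm:
  "summable (\<lambda>m. 1 / of_nat (Suc m) - 1 / (of_nat (Suc m) + z :: complex))"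
proof (cases "z = 0")
  case False
  from summable_deriv_ln_Gamma[OF False] show ?thesis
    by (simp add: divide_inverse add.commute)
qed simp

lemma cHarm_0 [simp]: "cHarm 0 = 0"
  by (simp add: cHarm_def)

lemma cHarm_plus_1: "cHarm (z + 1) = cHarm z + 1 / (z + 1)"
proof -
  define g where "g m = 1 / (of_nat (Suc m) + z)" for m
  have "g \<longlonglongrightarrow> 0"
    unfolding g_def divide_inverse mult_1_left
    by (intro filterlim_compose[OF tendsto_inverse_0]
          tendsto_add_filterlim_at_infinity'[OF _ tendsto_const]
          filterlim_compose[OF tendsto_of_nat filterlim_Suc])
  then have "(\<lambda>m. g m - g (Suc m)) sums (1 / (z + 1))"
    using telescope_sums'[of g 0] by (simp add: g_def add.commute)
  moreover have "(\<lambda>m. g m - g (Suc m)) sums (cHarm (z + 1) - cHarm z)"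
  proof -
    have "(\<lambda>m. (1 / of_nat (Suc m) - 1 / (of_nat (Suc m) + (z + 1)))
              - (1 / of_nat (Suc m) - 1 / (of_nat (Suc m) + z)))
          sums (cHarm (z + 1) - cHarm z)"
      unfolding cHarm_def by (intro sums_diff summable_sums summable_cHarm)
    then show ?thesis
      by (simp add: g_def algebra_simps)
  qed
  ultimately show ?thesis
    using sums_unique2 by (metis add_diff_cancel_left' diff_add_cancel)
qed

lemma cHarm_of_nat_plus:
  "cHarm (of_nat k + z) = cHarm z + (\<Sum>m=1..k. 1 / (of_nat m + z))"
proof (induction k)
  case (Suc k)
  have "cHarm (of_nat (Suc k) + z) = cHarm ((of_nat k + z) + 1)"
    by (simp add: algebra_simps)
  also have "\<dots> = cHarm (of_nat k + z) + 1 / (of_nat (Suc k) + z)"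
    using cHarm_plus_1[of "of_nat k + z"] by (simp add: algebra_simps)
  finally show ?case
    using Suc by (simp add: algebra_simps)
qed simp

lemma sum_triangle_reflect:
  fixes F :: "nat \<Rightarrow> nat \<Rightarrow> 'a :: comm_monoid_add"
  shows "(\<Sum>k=1..n. \<Sum>j=0..k-1. F (n - j) (k - j)) = (\<Sum>i=1..n. \<Sum>m=1..i. F i m)"
proof -
  have "(\<Sum>k=1..n. \<Sum>j=0..k-1. F (n - j) (k - j))
      = (\<Sum>(k, j)\<in>Sigma {1..n} (\<lambda>k. {0..k-1}). F (n - j) (k - j))"
    by (rule sum.Sigma) auto
  also have "\<dots> = (\<Sum>(i, m)\<in>Sigma {1..n} (\<lambda>i. {1..i}). F i m)"
    by (rule sum.reindex_bij_witness[where i = "\<lambda>(i, m). (n - i + m, n - i)"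
                                       and j = "\<lambda>(k, j). (n - j, k - j)"]) auto
  also have "\<dots> = (\<Sum>i=1..n. \<Sum>m=1..i. F i m)"
    by (rule sum.Sigma[symmetric]) auto
  finally show ?thesis .
qed

lemma sum_triangle_cHarm:
  "(\<Sum>k=1..n. \<Sum>j=0..k-1. a (n - j) / (of_nat (k - j) + z))
     = (\<Sum>k=1..n. a k * cHarm (of_nat k + z)) - cHarm z * (\<Sum>k=1..n. a k)"
proof -
  have "(\<Sum>k=1..n. \<Sum>j=0..k-1. a (n - j) / (of_nat (k - j) + z))
      = (\<Sum>k=1..n. \<Sum>m=1..k. a k / (of_nat m + z))"
    by (rule sum_triangle_reflect)
  also have "\<dots> = (\<Sum>k=1..n. a k * (cHarm (of_nat k + z) - cHarm z))"
    by (simp add: cHarm_of_nat_plus sum_distrib_left)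
  finally show ?thesis
    by (simp add: sum_distrib_left sum_subtractf algebra_simps)
qed

lemma sum_triangle_oddHarm:
  "(\<Sum>k=1..n. \<Sum>j=0..k-1. a (n - j) / (2 * of_nat k - 2 * of_nat j - 1))
     = (\<Sum>k=1..n. a k * oddHarm k)"
proof -
  have "(\<Sum>k=1..n. \<Sum>j=0..k-1. a (n - j) / (2 * of_nat k - 2 * of_nat j - 1))
      = (\<Sum>k=1..n. \<Sum>j=0..k-1. a (n - j) / (2 * of_nat (k - j) - 1))"
    by (intro sum.cong refl) (auto simp: of_nat_diff)
  also have "\<dots> = (\<Sum>k=1..n. \<Sum>m=1..k. a k / (2 * of_nat m - 1))"
    by (rule sum_triangle_reflect)
  also have "\<dots> = (\<Sum>k=1..n. a k * oddHarm k)"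
    by (simp add: oddHarm_def sum_distrib_left)
  finally show ?thesis .
qed

theorem theorem3:
  fixes n :: nat and a :: "nat \<Rightarrow> complex" and r :: complex
  assumes r_not_negint: "\<forall>m::nat. r \<noteq> - of_nat (Suc m)"
  shows "(\<Sum>k=1..n. \<Sum>j=0..k-1. a (n - j) / (of_nat (k - j) + r))
           = (\<Sum>k=1..n. a k * cHarm (of_nat k + r)) - cHarm r * (\<Sum>k=1..n. a k)
         \<and> (\<Sum>k=1..n. \<Sum>j=0..k-1. a (n - j) / of_nat (k - j))
           = (\<Sum>k=1..n. a k * cHarm (of_nat k))
         \<and> (\<Sum>k=1..n. \<Sum>j=0..k-1. a (n - j) / (2 * of_nat k - 2 * of_nat j - 1))
           = (\<Sum>k=1..n. a k * oddHarm k)"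
  using sum_triangle_cHarm[where z = r] sum_triangle_cHarm[where z = 0] sum_triangle_oddHarm
  by simp

end
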